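(* Let $n\ge 2$ be an integer and $k$ an integer with $1\le k\le 2^n$. Then $$v_2\big(s(2^n,k+1)\big)>v_2\big(s(2^n,k)\big)-n.$$
   Context: The (unsigned) Stirling numbers of the first kind $s(n,k)$ are defined by $x(x+1)\cdots(x+n-1)=\sum_{k=0}^n s(n,k)x^k$, with $s(n,k)=0$ for $k>n$. $v_2$ denotes the $2$-adic valuation, with the convention $v_2(0)=+\infty$. *)

theory Defs
  imports "HOL-Combinatorics.Stirling" "HOL-Computational_Algebra.Primes" "HOL-Library.Extended_Nat"
begin

definition v2 :: "nat \<Rightarrow> enat" where
  "v2 m = (if m = 0 then \<infinity> else enat (multiplicity (2::nat) m))"

end

theory Submission
  imports Defs "HOL-Computational_Algebra.Polynomial"
begin

(*
  With $P_n(x) = \prod_{i<2^n} (i + 2^{n-1} x)$, the coefficient of $x^k$ is $2^{(n-1)k} s(2^n,k)$.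
  Splitting $P_{n+1}$ into its even and odd factors and pairing the odd factors $2i+1$ and
  $2^{n+1}-2i-1$ gives $P_{n+1} = 2^{2^n} P_n \cdot U_n(x^2+2x)$, hence
  $P_n = 2^{2^n-2} x (1+x) S_n(x^2+2x)$ with $S_n = U_1 \cdots U_{n-1}$.
  Modulo $2^t$, $U_t$ is $(x-1)^{2^{t-1}}$ with $x$ scaled by $4^t$, so Kummer's theorem gives the
  exact valuations of its coefficients. In every coefficient of $S_n$ one term of the convolution
  has strictly smaller valuation than all others, which yields an exact valuation $V_n(j)$ of the
  $j$-th coefficient, nondecreasing in $j$. As $x^2+2x \equiv x^2 \pmod 2$, the $i$-th coefficient
  of $(1+x) S_n(x^2+2x)$ has valuation $V_n(\lfloor i/2 \rfloor)$. Therefore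
  $v_2(s(2^n,k)) + (n-1)k = 2^n - 2 + V_n(\lfloor (k-1)/2 \rfloor)$, and the monotonicity of $V_n$
  bounds the drop of the valuation from $k$ to $k+1$ by $n-1$.
*)

section \<open>Exact powers of 2\<close>

definition has_val2 :: "nat \<Rightarrow> int \<Rightarrow> bool" where
  "has_val2 e x \<longleftrightarrow> 2 ^ e dvd x \<and> \<not> 2 ^ Suc e dvd x"

lemma has_val2_iff: "has_val2 e x \<longleftrightarrow> (\<exists>u. odd u \<and> x = 2 ^ e * u)"
proof
  assume h: "has_val2 e x"
  then obtain u where u: "x = 2 ^ e * u"
    unfolding has_val2_def by (auto elim: dvdE)
  have "odd u"
  proof
    assume "even u"
    then obtain q where "u = 2 * q" by auto
    hence "x = 2 ^ Suc e * q" using u by simp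
    thus False using h unfolding has_val2_def by simp
  qed
  thus "\<exists>u. odd u \<and> x = 2 ^ e * u" using u by blast
next
  assume "\<exists>u. odd u \<and> x = 2 ^ e * u"
  then obtain u where u: "odd u" "x = 2 ^ e * u" by blast
  have "\<not> (2::int) ^ Suc e dvd x"
  proof
    assume "(2::int) ^ Suc e dvd x"
    then obtain q where "x = 2 ^ Suc e * q" by (auto elim: dvdE)
    hence "u = 2 * q" using u by simp
    thus False using u by simp
  qed
  thus "has_val2 e x" using u unfolding has_val2_def by simp
qed

lemma has_val2_0_iff [simp]: "has_val2 0 x \<longleftrightarrow> odd x"
  unfolding has_val2_def by simp

lemma has_val2_minus_iff [simp]: "has_val2 e (- x) \<longleftrightarrow> has_val2 e x"
  unfolding has_val2_def by simp

lemma has_val2_imp_nonzero: "has_val2 e x \<Longrightarrow> x \<noteq> 0"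
  unfolding has_val2_def by auto

lemma has_val2_imp_dvd: "has_val2 e x \<Longrightarrow> f \<le> e \<Longrightarrow> 2 ^ f dvd x"
  unfolding has_val2_def by (meson dvd_trans le_imp_power_dvd)

lemma has_val2_unique: "has_val2 e x \<Longrightarrow> has_val2 f x \<Longrightarrow> e = f"
  by (metis Suc_leI has_val2_def has_val2_imp_dvd linorder_neqE_nat)

lemma has_val2_mult: "has_val2 e x \<Longrightarrow> has_val2 f y \<Longrightarrow> has_val2 (e + f) (x * y)"
proof -
  assume "has_val2 e x" "has_val2 f y"
  then obtain u v where "odd u" "x = 2 ^ e * u" "odd v" "y = 2 ^ f * v"
    unfolding has_val2_iff by blast
  hence "odd (u * v)" "x * y = 2 ^ (e + f) * (u * v)" by (auto simp: power_add)
  thus ?thesis unfolding has_val2_iff by blast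
qed

lemma has_val2_pow2_mult: "has_val2 e x \<Longrightarrow> has_val2 (k + e) (2 ^ k * x)"
  using has_val2_mult[of k "2 ^ k" e x] has_val2_iff[of k "2 ^ k"] by auto

lemma has_val2_pow2_multD: "has_val2 e (2 ^ k * x) \<Longrightarrow> k \<le> e \<and> has_val2 (e - k) x"
proof -
  assume "has_val2 e (2 ^ k * x)"
  then obtain u where u: "odd u" "2 ^ k * x = 2 ^ e * u" unfolding has_val2_iff by blast
  have "k \<le> e"
  proof (rule ccontr)
    assume "\<not> k \<le> e"
    hence "(2::int) ^ k = 2 ^ e * 2 ^ (k - e)" "k - e > 0" by (auto simp flip: power_add)
    hence "u = 2 ^ (k - e) * x" using u by (simp add: mult.assoc)
    thus False using u \<open>k - e > 0\<close> by simp
  qed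
  hence "(2::int) ^ e = 2 ^ k * 2 ^ (e - k)" by (simp flip: power_add)
  hence "x = 2 ^ (e - k) * u" using u by simp
  thus ?thesis using \<open>k \<le> e\<close> u unfolding has_val2_iff by blast
qed

lemma has_val2_odd_mult_iff: "odd u \<Longrightarrow> has_val2 e (u * x) \<longleftrightarrow> has_val2 e x"
proof -
  assume "odd u"
  hence "coprime ((2::int) ^ k) u" for k by simp
  hence "(2::int) ^ k dvd u * x \<longleftrightarrow> 2 ^ k dvd x" for k
    by (simp add: coprime_dvd_mult_right_iff)
  thus ?thesis unfolding has_val2_def by blast
qed

lemma has_val2_mult_cancel:
  assumes "has_val2 e (x * y)" and "has_val2 f x"
  shows "f \<le> e \<and> has_val2 (e - f) y"
proof -
  obtain u where u: "odd u" "x = 2 ^ f * u" using assms(2) unfolding has_val2_iff by blast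
  have "has_val2 e (2 ^ f * (u * y))" using assms(1) u by (simp add: mult.assoc)
  thus ?thesis using has_val2_pow2_multD has_val2_odd_mult_iff[OF \<open>odd u\<close>] by blast
qed

lemma has_val2_add: "has_val2 e x \<Longrightarrow> 2 ^ Suc e dvd y \<Longrightarrow> has_val2 e (x + y)"
  unfolding has_val2_def by (metis dvd_add_left_iff dvd_add_right_iff dvd_mult_right power_Suc)

lemma has_val2_cong: "has_val2 e y \<Longrightarrow> e < t \<Longrightarrow> 2 ^ t dvd x - y \<Longrightarrow> has_val2 e x"
proof -
  assume "has_val2 e y" "e < t" "2 ^ t dvd x - y"
  hence "2 ^ Suc e dvd x - y" by (meson Suc_leI dvd_trans le_imp_power_dvd)
  from has_val2_add[OF \<open>has_val2 e y\<close> this] show "has_val2 e x" by simp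
qed

lemma has_val2_sum:
  assumes "finite A" "a \<in> A" "has_val2 e (g a)"
    and "\<And>b. b \<in> A \<Longrightarrow> b \<noteq> a \<Longrightarrow> 2 ^ Suc e dvd g b"
  shows "has_val2 e (sum g A)"
proof -
  have "sum g A = g a + sum g (A - {a})" using assms(1,2) by (simp add: sum.remove)
  moreover have "2 ^ Suc e dvd sum g (A - {a})" using assms(4) by (intro dvd_sum) auto
  ultimately show ?thesis using has_val2_add[OF assms(3)] by simp
qed

lemma pow2_dvd_mult:
  "(2::int) ^ a dvd x \<Longrightarrow> 2 ^ b dvd y \<Longrightarrow> c \<le> a + b \<Longrightarrow> 2 ^ c dvd x * y"
proof -
  assume "2 ^ a dvd x" "2 ^ b dvd y" "c \<le> a + b"
  hence "(2::int) ^ (a + b) dvd x * y" by (simp add: power_add mult_dvd_mono)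
  thus ?thesis using \<open>c \<le> a + b\<close> by (meson dvd_trans le_imp_power_dvd)
qed

lemma has_val2_of_nat_iff: "m \<noteq> 0 \<Longrightarrow> has_val2 e (int m) \<longleftrightarrow> multiplicity 2 m = e"
proof -
  assume "m \<noteq> 0"
  have "has_val2 e (int m) \<longleftrightarrow> 2 ^ e dvd m \<and> \<not> 2 ^ Suc e dvd m"
    unfolding has_val2_def by (metis of_nat_dvd_iff of_nat_numeral of_nat_power)
  also have "\<dots> \<longleftrightarrow> multiplicity 2 m = e"
  proof
    assume "2 ^ e dvd m \<and> \<not> 2 ^ Suc e dvd m"
    thus "multiplicity 2 m = e" by (intro multiplicity_eqI) auto
  next
    assume "multiplicity 2 m = e"
    moreover have "\<not> 2 ^ Suc (multiplicity 2 m) dvd m"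
      using \<open>m \<noteq> 0\<close> multiplicity_geI[of m 2 "Suc (multiplicity 2 m)"] by auto
    ultimately show "2 ^ e dvd m \<and> \<not> 2 ^ Suc e dvd m" using multiplicity_dvd[of 2 m] by blast
  qed
  finally show ?thesis .
qed

lemma v2_eq_if_has_val2: "has_val2 e (int m) \<Longrightarrow> v2 m = enat e"
  using has_val2_imp_nonzero[of e "int m"] has_val2_of_nat_iff[of m e] by (simp add: v2_def)

section \<open>2-adic valuations of binomial coefficients of a power of 2\<close>

lemma pow_multiplicity2_le: "0 < (b::nat) \<Longrightarrow> 2 ^ multiplicity 2 b \<le> b"
  by (simp add: dvd_imp_le multiplicity_dvd)

lemma multiplicity2_less: "0 < (b::nat) \<Longrightarrow> multiplicity 2 b < b"
  using pow_multiplicity2_le[of b] less_exp[of "multiplicity 2 b"] by linarith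

lemma multiplicity2_less_exp: "0 < (b::nat) \<Longrightarrow> b < 2 ^ m \<Longrightarrow> multiplicity 2 b < m"
  using pow_multiplicity2_le[of b] by (metis le_less_trans nat_power_less_imp_less zero_less_numeral)

lemma has_val2_multiplicity2: "0 < (b::nat) \<Longrightarrow> has_val2 (multiplicity 2 b) (int b)"
  by (simp add: has_val2_of_nat_iff)

lemma multiplicity2_pow2_diff:
  assumes "0 < (c::nat)" "c < 2 ^ m"
  shows "multiplicity 2 (2 ^ m - c) = multiplicity 2 c"
proof -
  have "has_val2 (multiplicity 2 c) (- int c)" using assms(1) by (simp add: has_val2_multiplicity2)
  moreover have "int (2 ^ m - c) - - int c = 2 ^ m" using assms(2) by (simp add: of_nat_diff)
  ultimately have "has_val2 (multiplicity 2 c) (int (2 ^ m - c))"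
    using has_val2_cong[of _ "- int c" m] multiplicity2_less_exp[OF assms] by simp
  thus ?thesis using assms(2) has_val2_of_nat_iff[of "2 ^ m - c"] by simp
qed

lemma odd_binomial_pow2_minus_1: "r < 2 ^ m \<Longrightarrow> odd (2 ^ m - 1 choose r)"
proof (induction r)
  case 0
  show ?case by simp
next
  case (Suc r)
  let ?N = "(2::nat) ^ m - 1"
  have "Suc r * (?N choose Suc r) = (?N - r) * (?N choose r)"
    using binomial_absorption[of r ?N] binomial_absorb_comp[of ?N r] by simp
  moreover have "?N - r = 2 ^ m - Suc r" by simp
  ultimately have "int (Suc r) * int (?N choose Suc r) = int (2 ^ m - Suc r) * int (?N choose r)"
    by (metis of_nat_mult)
  moreover have "has_val2 (multiplicity 2 (Suc r)) (int (2 ^ m - Suc r) * int (?N choose r))"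
    using has_val2_mult[OF has_val2_multiplicity2, of "2 ^ m - Suc r" 0] Suc
      multiplicity2_pow2_diff[of "Suc r" m] by simp
  ultimately have "has_val2 (multiplicity 2 (Suc r)) (int (Suc r) * int (?N choose Suc r))"
    by simp
  from has_val2_mult_cancel[OF this has_val2_multiplicity2] show ?case by simp
qed

text \<open>Kummer's theorem: $v_2 \binom{2^m}{b} = m - v_2(b)$ for $0 < b < 2^m$.\<close>

definition binom_val2 :: "nat \<Rightarrow> nat \<Rightarrow> nat" where
  "binom_val2 m b = (if b = 0 \<or> b = 2 ^ m then 0 else m - multiplicity 2 b)"

lemma binom_val2_le: "binom_val2 m b \<le> m"
  unfolding binom_val2_def by auto

lemma binom_val2_eq: "0 < b \<Longrightarrow> b < 2 ^ m \<Longrightarrow> binom_val2 m b = m - multiplicity 2 b"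
  unfolding binom_val2_def by simp

lemma binom_val2_pow2_diff: "c \<le> 2 ^ m \<Longrightarrow> binom_val2 m (2 ^ m - c) = binom_val2 m c"
  unfolding binom_val2_def using multiplicity2_pow2_diff[of c m] by auto

lemma has_val2_binomial_pow2:
  assumes "b \<le> 2 ^ m"
  shows "has_val2 (binom_val2 m b) (int (2 ^ m choose b))"
proof (cases "b = 0 \<or> b = 2 ^ m")
  case True
  then show ?thesis unfolding binom_val2_def by auto
next
  case False
  hence b: "0 < b" "b < 2 ^ m" using assms by auto
  have "b * (2 ^ m choose b) = 2 ^ m * (2 ^ m - 1 choose (b - 1))"
    using Suc_times_binomial[of "b - 1" "2 ^ m - 1"] b by simp
  hence "int b * int (2 ^ m choose b) = 2 ^ m * int (2 ^ m - 1 choose (b - 1))"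
    by (metis of_nat_mult of_nat_numeral of_nat_power)
  moreover have "has_val2 m (2 ^ m * int (2 ^ m - 1 choose (b - 1)))"
    using has_val2_pow2_mult[of 0 _ m] odd_binomial_pow2_minus_1[of "b - 1" m] b by simp
  ultimately have "has_val2 m (int b * int (2 ^ m choose b))" by simp
  from has_val2_mult_cancel[OF this has_val2_multiplicity2[OF b(1)]]
  show ?thesis using binom_val2_eq[OF b] by simp
qed

lemma binom_val2_shift_lt:
  assumes "0 < c" "c < 2 ^ (m - 1)" "b + c \<le> 2 ^ m"
  shows "binom_val2 m b < 2 * c + binom_val2 (m - 1) c + binom_val2 m (b + c)"
proof -
  have "2 ^ (m - 1) \<le> (2::nat) ^ m" by simp
  hence cm: "c < 2 ^ m" using assms(2) by linarith
  have vc: "multiplicity 2 c < c" "multiplicity 2 c < m - 1"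
    using multiplicity2_less multiplicity2_less_exp assms(1,2) by auto
  have bc: "binom_val2 (m - 1) c = m - 1 - multiplicity 2 c"
    using binom_val2_eq assms(1,2) by blast
  show ?thesis
  proof (cases "b + c = 2 ^ m")
    case True
    hence "b = 2 ^ m - c" by simp
    hence "binom_val2 m b = m - multiplicity 2 c"
      using binom_val2_pow2_diff[of c m] binom_val2_eq[OF assms(1) cm] cm by simp
    thus ?thesis using bc vc by simp
  next
    case False
    hence "binom_val2 m (b + c) = m - multiplicity 2 (b + c)" "multiplicity 2 (b + c) < m"
      using assms binom_val2_eq[of "b + c" m] multiplicity2_less_exp[of "b + c" m] by auto
    thus ?thesis using binom_val2_le[of m b] bc vc by linarith
  qed
qed

section \<open>The polynomials collecting pairs of odd factors\<close>

lemma dvd_mult_diff_mult: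
  fixes m a b c d :: "'a::comm_ring_1"
  assumes "m dvd a - b" "m dvd c - d"
  shows "m dvd a * c - b * d"
proof -
  have "a * c - b * d = (a - b) * c + b * (c - d)" by (simp add: algebra_simps)
  thus ?thesis using assms by simp
qed

lemma dvd_prod_diff_prod:
  fixes m :: "'a::comm_ring_1"
  shows "(\<And>x. x \<in> A \<Longrightarrow> m dvd f x - g x) \<Longrightarrow> m dvd prod f A - prod g A"
  by (induction A rule: infinite_finite_induct) (auto intro: dvd_mult_diff_mult)

lemma dvd_square_diff:
  fixes m a b :: "'a::comm_ring_1"
  assumes "m dvd a - b" "2 dvd m"
  shows "2 * m dvd a * a - b * b"
proof -
  obtain k where k: "a - b = m * k" using assms(1) by blast
  obtain h where h: "m = 2 * h" using assms(2) by blast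
  have "a * a - b * b = (a - b) * (a - b) + 2 * b * (a - b)" by (simp add: algebra_simps)
  also have "\<dots> = 2 * m * (h * k * k + b * k)" unfolding k by (subst (1) h) (simp add: algebra_simps)
  finally show ?thesis by simp
qed

lemma prod_lessThan_add:
  fixes a b :: nat
  shows "(\<Prod>l<a + b. f l) = (\<Prod>l<a. f l) * (\<Prod>l<b. f (a + l))"
  by (induction b) (simp_all add: mult.assoc)

definition odd_sq_poly :: "nat \<Rightarrow> int poly" where
  "odd_sq_poly t = (\<Prod>l<2 ^ (t - 1). [:- ((2 * int l + 1) ^ 2), 1:])"

lemma odd_sq_poly_cong: "1 \<le> t \<Longrightarrow> [:2 ^ t:] dvd odd_sq_poly t - [:-1, 1:] ^ 2 ^ (t - 1)"
proof (induction t rule: nat_induct_at_least)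
  case base
  show ?case by (simp add: odd_sq_poly_def)
next
  case (Suc t)
  let ?K = "(2::nat) ^ (t - 1)" and ?X = "[:-1, 1::int:] ^ 2 ^ (t - 1)"
  let ?B = "\<Prod>l<?K. [:- ((2 * int (?K + l) + 1) ^ 2), 1::int:]"
  obtain s where s: "t = Suc s" using Suc.hyps by (cases t) auto
  have K: "(2::nat) ^ (Suc t - 1) = ?K + ?K" "(2::int) ^ Suc t = 4 * 2 ^ (t - 1)"
    unfolding s by simp_all
  have split: "odd_sq_poly (Suc t) = odd_sq_poly t * ?B"
    unfolding odd_sq_poly_def K(1) prod_lessThan_add ..
  have "(2 * int l + 1) ^ 2 - (2 * int (?K + l) + 1) ^ 2 = 4 * 2 ^ (t - 1) * (- (2 * int l + 1) - 2 ^ (t - 1))" for l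
    by (simp add: algebra_simps power2_eq_square)
  hence shift: "[:2 ^ Suc t:] dvd ?B - odd_sq_poly t"
    unfolding odd_sq_poly_def K(2) by (intro dvd_prod_diff_prod) simp
  have "2 dvd [:(2::int) ^ t:]"
    by (simp add: s numeral_poly)
  hence square: "[:2 ^ Suc t:] dvd odd_sq_poly t * odd_sq_poly t - ?X * ?X"
    using dvd_square_diff[OF Suc.IH] by (simp add: numeral_poly mult.commute)
  have "odd_sq_poly t * ?B - ?X * ?X
      = odd_sq_poly t * (?B - odd_sq_poly t) + (odd_sq_poly t * odd_sq_poly t - ?X * ?X)"
    by (simp add: algebra_simps)
  hence "[:2 ^ Suc t:] dvd odd_sq_poly t * ?B - ?X * ?X"
    using shift square by (metis dvd_add dvd_mult)
  thus ?case unfolding split K(1) by (simp add: power_add)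
qed

definition pair_poly :: "nat \<Rightarrow> int poly" where
  "pair_poly t = (\<Prod>l<2 ^ (t - 1). [:4 ^ t - (2 ^ t - 2 * int l - 1) ^ 2, 1:])"

lemma pair_poly_cong: "[:2 ^ t:] dvd pair_poly t - odd_sq_poly t"
  unfolding pair_poly_def odd_sq_poly_def
proof (intro dvd_prod_diff_prod)
  fix l :: nat
  have "(4::int) ^ t = 2 ^ t * 2 ^ t" by (simp flip: power_mult_distrib)
  hence "(4::int) ^ t - (2 ^ t - 2 * int l - 1) ^ 2 + (2 * int l + 1) ^ 2 = 2 ^ t * (2 * (2 * int l + 1))"
    by (simp add: algebra_simps power2_eq_square)
  thus "[:2 ^ t:] dvd [:4 ^ t - (2 ^ t - 2 * int l - 1) ^ 2, 1:] - [:- ((2 * int l + 1) ^ 2), 1:]"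
    by simp
qed

lemma degree_pair_poly: "degree (pair_poly t) \<le> 2 ^ (t - 1)"
  unfolding pair_poly_def
  using degree_prod_sum_le[of "{..<2 ^ (t - 1)}" "\<lambda>l. [:4 ^ t - (2 ^ t - 2 * int l - 1) ^ 2, 1::int:]"]
  by (simp add: o_def)

lemma has_val2_coeff_pair_poly:
  assumes "1 \<le> t" "b \<le> 2 ^ (t - 1)"
  shows "has_val2 (binom_val2 (t - 1) b) (coeff (pair_poly t) b)"
proof -
  let ?X = "[:-1, 1::int:] ^ 2 ^ (t - 1)"
  have "coeff ?X b = int (2 ^ (t - 1) choose b) * (-1) ^ (2 ^ (t - 1) - b)"
    using coeff_linear_poly_power[OF assms(2), of "-1::int" 1] by simp
  hence X: "has_val2 (binom_val2 (t - 1) b) (coeff ?X b)"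
    using has_val2_mult[OF has_val2_binomial_pow2[OF assms(2)], of 0] by simp
  have "[:2 ^ t:] dvd pair_poly t - ?X"
    using dvd_add[OF pair_poly_cong odd_sq_poly_cong[OF assms(1)]] by simp
  hence "2 ^ t dvd coeff (pair_poly t) b - coeff ?X b"
    unfolding const_poly_dvd_iff by (metis coeff_diff)
  moreover have "binom_val2 (t - 1) b < t" using binom_val2_le[of "t - 1" b] assms(1) by linarith
  ultimately show ?thesis using has_val2_cong[OF X] by blast
qed

text \<open>These are the polynomials $U_t$ with $U_t(x^2 + 2x) = \prod_{i < 2^t} (2i + 1 + 2^t x)$:
  the factors for $i$ and $2^t - 1 - i$ combine into one linear factor in $x^2 + 2x$.\<close>

definition scaled_pair_poly :: "nat \<Rightarrow> int poly" where
  "scaled_pair_poly t = pcompose (pair_poly t) [:0, 4 ^ t:]"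

definition pair_val :: "nat \<Rightarrow> nat \<Rightarrow> nat" where
  "pair_val t b = 2 * t * b + binom_val2 (t - 1) b"

lemma degree_scaled_pair_poly: "degree (scaled_pair_poly t) \<le> 2 ^ (t - 1)"
  unfolding scaled_pair_poly_def using degree_pair_poly[of t] by (simp add: degree_pcompose)

lemma has_val2_coeff_scaled_pair_poly:
  assumes "1 \<le> t" "b \<le> 2 ^ (t - 1)"
  shows "has_val2 (pair_val t b) (coeff (scaled_pair_poly t) b)"
proof -
  have "coeff (scaled_pair_poly t) b = 2 ^ (2 * t * b) * coeff (pair_poly t) b"
    unfolding scaled_pair_poly_def coeff_pcompose_linear
    by (simp add: power_mult power_mult_distrib[symmetric])
  thus ?thesis using has_val2_pow2_mult[OF has_val2_coeff_pair_poly[OF assms]]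
    unfolding pair_val_def by simp
qed

section \<open>The valuation function of the coefficients\<close>

lemma pair_val_0 [simp]: "pair_val t 0 = 0"
  unfolding pair_val_def binom_val2_def by simp

lemma pair_val_top: "pair_val t (2 ^ (t - 1)) = 2 * t * 2 ^ (t - 1)"
  unfolding pair_val_def binom_val2_def by simp

lemma pair_val_ge: "2 * t * b \<le> pair_val t b"
  unfolding pair_val_def by simp

lemma pair_val_le: "pair_val t b \<le> 2 * t * b + (t - 1)"
  unfolding pair_val_def using binom_val2_le[of "t - 1" b] by simp

lemma pair_val_mono:
  assumes "b \<le> b'"
  shows "pair_val t b \<le> pair_val t b'"
proof (cases "b = b'")
  case False
  hence "2 * t * Suc b \<le> 2 * t * b'" using assms by (intro mult_le_mono2) simp
  hence "2 * t * b + (t - 1) \<le> 2 * t * b'" by simp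
  thus ?thesis using pair_val_le[of t b] pair_val_ge[of t b'] by linarith
qed simp

definition pair_prod_deg :: "nat \<Rightarrow> nat" where
  "pair_prod_deg n = 2 ^ (n - 1) - 1"

lemma pair_prod_deg_Suc: "1 \<le> n \<Longrightarrow> pair_prod_deg (Suc n) = pair_prod_deg n + 2 ^ (n - 1)"
  unfolding pair_prod_deg_def by (cases n) simp_all

text \<open>The valuation $V_n(j)$ of the $j$-th coefficient of $S_n$: in the convolution for
  $S_{n+1} = S_n U_n$, the term with index \<open>min j (pair_prod_deg n)\<close> in $S_n$ has strictly
  smaller valuation than all others.\<close>

primrec prod_val :: "nat \<Rightarrow> nat \<Rightarrow> nat" where
  "prod_val 0 j = 0"
| "prod_val (Suc n) j = (if j \<le> pair_prod_deg n then prod_val n j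
     else prod_val n (pair_prod_deg n) + pair_val n (j - pair_prod_deg n))"

lemma prod_val_Suc_lower: "j \<le> pair_prod_deg n \<Longrightarrow> prod_val (Suc n) j = prod_val n j"
  by simp

lemma prod_val_Suc_upper:
  "pair_prod_deg n \<le> j \<Longrightarrow>
    prod_val (Suc n) j = prod_val n (pair_prod_deg n) + pair_val n (j - pair_prod_deg n)"
  by auto

declare prod_val.simps(2) [simp del]

lemma prod_val_mono: "j \<le> j' \<Longrightarrow> prod_val n j \<le> prod_val n j'"
proof (induction n arbitrary: j j')
  case (Suc n)
  let ?D = "pair_prod_deg n"
  consider "j' \<le> ?D" | "j \<le> ?D" "?D < j'" | "?D < j" by linarith
  thus ?case
  proof cases
    case 1
    thus ?thesis using Suc by (simp add: prod_val_Suc_lower)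
  next
    case 2
    thus ?thesis using Suc.IH[of j ?D] by (simp add: prod_val_Suc_lower prod_val_Suc_upper)
  next
    case 3
    thus ?thesis using Suc.prems pair_val_mono[of "j - ?D" "j' - ?D" n] by (simp add: prod_val_Suc_upper)
  qed
qed simp

lemma prod_val_top_le:
  "1 \<le> n \<Longrightarrow> c \<le> pair_prod_deg n \<Longrightarrow>
    prod_val n (pair_prod_deg n) \<le> prod_val n (pair_prod_deg n - c) + 2 * (n - 1) * c"
proof (induction n arbitrary: c rule: nat_induct_at_least)
  case base
  then show ?case by (simp add: pair_prod_deg_def)
next
  case (Suc n)
  let ?D = "pair_prod_deg n" and ?K = "(2::nat) ^ (n - 1)"
  have D: "pair_prod_deg (Suc n) = ?D + ?K" using pair_prod_deg_Suc[OF Suc.hyps] .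
  have top: "prod_val (Suc n) (?D + ?K) = prod_val n ?D + 2 * n * ?K"
    using prod_val_Suc_upper[of n "?D + ?K"] pair_val_top[of n] by simp
  show ?case
  proof (cases "c \<le> ?K")
    case True
    have "prod_val (Suc n) (?D + ?K - c) = prod_val n ?D + pair_val n (?K - c)"
      using prod_val_Suc_upper[of n "?D + ?K - c"] True by simp
    moreover have "2 * n * (?K - c) \<le> pair_val n (?K - c)" by (rule pair_val_ge)
    moreover have "2 * n * ?K = 2 * n * (?K - c) + 2 * n * c" using True by (simp add: algebra_simps)
    ultimately show ?thesis using top unfolding D by simp
  next
    case False
    hence "c - ?K \<le> ?D" using Suc.prems D by simp
    from Suc.IH[OF this] have "prod_val n ?D \<le> prod_val n (?D + ?K - c) + 2 * (n - 1) * (c - ?K)"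
      using False by (simp add: diff_diff_right)
    moreover have "prod_val (Suc n) (?D + ?K - c) = prod_val n (?D + ?K - c)"
      using False by (simp add: prod_val_Suc_lower)
    moreover have "2 * n * c = 2 * n * (c - ?K) + 2 * n * ?K"
      using False by (simp flip: add_mult_distrib2)
    moreover have "2 * (n - 1) * (c - ?K) \<le> 2 * n * (c - ?K)" by simp
    ultimately have "prod_val (Suc n) (?D + ?K) \<le> prod_val (Suc n) (?D + ?K - c) + 2 * n * c"
      using top by linarith
    thus ?thesis unfolding D by simp
  qed
qed

lemma prod_val_le_shift:
  "1 \<le> n \<Longrightarrow> b \<le> j \<Longrightarrow> j \<le> pair_prod_deg n \<Longrightarrow>
    prod_val n j \<le> prod_val n (j - b) + 2 * (n - 1) * b + (n - 1)"
proof (induction n arbitrary: j b rule: nat_induct_at_least)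
  case base
  then show ?case by (simp add: pair_prod_deg_def)
next
  case (Suc n)
  let ?D = "pair_prod_deg n"
  consider "j \<le> ?D" | "?D < j" "j - b \<le> ?D" | "?D < j - b" by linarith
  thus ?case
  proof cases
    case 1
    have "2 * (n - 1) * b + (n - 1) \<le> 2 * n * b + n" by (simp add: add_le_mono)
    thus ?thesis using 1 Suc.IH[of b j] Suc.prems by (simp add: prod_val_Suc_lower)
  next
    case 2
    have "prod_val n ?D \<le> prod_val n (j - b) + 2 * (n - 1) * (?D - (j - b))"
      using prod_val_top_le[OF Suc.hyps, of "?D - (j - b)"] 2 by simp
    moreover have "pair_val n (j - ?D) \<le> 2 * n * (j - ?D) + (n - 1)" by (rule pair_val_le)
    moreover have "2 * n * b = 2 * n * (?D - (j - b)) + 2 * n * (j - ?D)"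
      using 2 Suc.prems by (simp flip: add_mult_distrib2)
    moreover have "2 * (n - 1) * (?D - (j - b)) \<le> 2 * n * (?D - (j - b))" by simp
    moreover have "prod_val (Suc n) j = prod_val n ?D + pair_val n (j - ?D)"
      "prod_val (Suc n) (j - b) = prod_val n (j - b)"
      using 2 by (simp_all add: prod_val_Suc_lower prod_val_Suc_upper)
    moreover have "n - 1 \<le> n" by simp
    ultimately have "prod_val (Suc n) j \<le> prod_val (Suc n) (j - b) + 2 * n * b + n" by linarith
    thus ?thesis by simp
  next
    case 3
    have "pair_val n (j - ?D) \<le> 2 * n * (j - ?D) + (n - 1)" by (rule pair_val_le)
    moreover have "2 * n * (j - b - ?D) \<le> pair_val n (j - b - ?D)" by (rule pair_val_ge)
    moreover have "2 * n * (j - ?D) = 2 * n * (j - b - ?D) + 2 * n * b"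
      using 3 by (simp flip: add_mult_distrib2)
    moreover have "prod_val (Suc n) j = prod_val n ?D + pair_val n (j - ?D)"
      "prod_val (Suc n) (j - b) = prod_val n ?D + pair_val n (j - b - ?D)"
      using 3 by (simp_all add: prod_val_Suc_upper)
    moreover have "n - 1 \<le> n" by simp
    ultimately have "prod_val (Suc n) j \<le> prod_val (Suc n) (j - b) + 2 * n * b + n" by linarith
    thus ?thesis by simp
  qed
qed

lemma prod_val_lt_shift:
  assumes "1 \<le> n" "0 < b" "b \<le> j" "j \<le> pair_prod_deg n"
  shows "prod_val n j < prod_val n (j - b) + pair_val n b"
proof -
  have "(0::nat) < 2 ^ (n - 1)" by simp
  hence "b < 2 ^ (n - 1)" using assms(3,4) unfolding pair_prod_deg_def by linarith
  hence "pair_val n b = 2 * n * b + (n - 1 - multiplicity 2 b)" "multiplicity 2 b < n - 1"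
    using binom_val2_eq multiplicity2_less_exp assms(2) unfolding pair_val_def by auto
  moreover have "multiplicity 2 b < b" using multiplicity2_less assms(2) .
  moreover have "2 * n * b = 2 * (n - 1) * b + 2 * b" using assms(1) by (cases n) simp_all
  ultimately show ?thesis using prod_val_le_shift[OF assms(1,3,4)] by linarith
qed

lemma prod_val_top_lt:
  assumes "1 \<le> n" "0 < c" "c \<le> pair_prod_deg n" "b + c \<le> 2 ^ (n - 1)"
  shows "prod_val n (pair_prod_deg n) + pair_val n b
    < prod_val n (pair_prod_deg n - c) + pair_val n (b + c)"
proof -
  obtain m where n: "n = Suc m" using assms(1) by (cases n) auto
  have m: "1 \<le> m" using assms(2,3) n by (cases m) (simp_all add: pair_prod_deg_def)
  have W: "pair_val n b = 2 * n * b + binom_val2 m b"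
    "pair_val n (b + c) = 2 * n * b + 2 * m * c + 2 * c + binom_val2 m (b + c)"
    unfolding pair_val_def n by (simp_all add: algebra_simps)
  show ?thesis
  proof (cases "m < 2 * c")
    case True
    have "prod_val n (pair_prod_deg n) \<le> prod_val n (pair_prod_deg n - c) + 2 * m * c"
      using prod_val_top_le[OF assms(1,3)] n by simp
    thus ?thesis using W binom_val2_le[of m b] True by linarith
  next
    case False
    let ?K = "(2::nat) ^ (m - 1)"
    have "2 ^ m = 2 * ?K" using m by (cases m) simp_all
    hence cK: "c < ?K" using False less_exp[of m] by linarith
    have D: "pair_prod_deg n = pair_prod_deg m + ?K" using pair_prod_deg_Suc[OF m] n by simp
    have "prod_val n (pair_prod_deg n) = prod_val m (pair_prod_deg m) + 2 * m * ?K"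
      using prod_val_Suc_upper[of m] pair_val_top[of m] D n by simp
    moreover have "prod_val n (pair_prod_deg n - c) = prod_val m (pair_prod_deg m) + pair_val m (?K - c)"
      using prod_val_Suc_upper[of m "pair_prod_deg m + ?K - c"] D n cK by simp
    moreover have "pair_val m (?K - c) = 2 * m * (?K - c) + binom_val2 (m - 1) c"
      unfolding pair_val_def using binom_val2_pow2_diff[of c "m - 1"] cK by simp
    moreover have "2 * m * ?K = 2 * m * (?K - c) + 2 * m * c"
      using cK by (simp flip: add_mult_distrib2)
    moreover have "binom_val2 m b < 2 * c + binom_val2 (m - 1) c + binom_val2 m (b + c)"
      using binom_val2_shift_lt[OF assms(2) cK] assms(4) n by simp
    ultimately show ?thesis using W by linarith
  qed
qed

lemma prod_val_Suc_eq_min: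
  "prod_val (Suc n) j = prod_val n (min j (pair_prod_deg n)) + pair_val n (j - min j (pair_prod_deg n))"
  by (cases "j \<le> pair_prod_deg n") (simp_all add: prod_val_Suc_lower prod_val_Suc_upper)

lemma prod_val_Suc_lt:
  assumes "1 \<le> n" "i \<le> j" "i \<le> pair_prod_deg n" "j - i \<le> 2 ^ (n - 1)"
    and "i \<noteq> min j (pair_prod_deg n)"
  shows "prod_val (Suc n) j < prod_val n i + pair_val n (j - i)"
proof (cases "j \<le> pair_prod_deg n")
  case True
  hence "prod_val n j < prod_val n i + pair_val n (j - i)"
    using prod_val_lt_shift[OF assms(1), of "j - i" j] assms(2,5) by simp
  thus ?thesis using True by (simp add: prod_val_Suc_lower)
next
  case False
  let ?D = "pair_prod_deg n"
  have "prod_val n ?D + pair_val n (j - ?D) < prod_val n (?D - (?D - i)) + pair_val n (j - ?D + (?D - i))"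
    using prod_val_top_lt[OF assms(1), of "?D - i" "j - ?D"] False assms(3-5) by simp
  thus ?thesis using False assms(3) by (simp add: prod_val_Suc_upper)
qed

section \<open>The product $S_n = U_1 \cdots U_{n-1}$\<close>

definition pair_prod :: "nat \<Rightarrow> int poly" where
  "pair_prod n = (\<Prod>t\<in>{1..<n}. scaled_pair_poly t)"

lemma pair_prod_Suc: "1 \<le> n \<Longrightarrow> pair_prod (Suc n) = pair_prod n * scaled_pair_poly n"
  unfolding pair_prod_def by (simp add: prod.atLeastLessThan_Suc)

lemma degree_pair_prod: "1 \<le> n \<Longrightarrow> degree (pair_prod n) \<le> pair_prod_deg n"
proof (induction n rule: nat_induct_at_least)
  case base
  then show ?case by (simp add: pair_prod_def)
next
  case (Suc n)
  have "degree (pair_prod (Suc n)) \<le> degree (pair_prod n) + degree (scaled_pair_poly n)"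
    unfolding pair_prod_Suc[OF Suc.hyps] by (rule degree_mult_le)
  thus ?case using Suc.IH degree_scaled_pair_poly[of n] pair_prod_deg_Suc[OF Suc.hyps] by simp
qed

lemma has_val2_coeff_pair_prod:
  "1 \<le> n \<Longrightarrow> j \<le> pair_prod_deg n \<Longrightarrow> has_val2 (prod_val n j) (coeff (pair_prod n) j)"
proof (induction n arbitrary: j rule: nat_induct_at_least)
  case base
  then show ?case by (simp add: pair_prod_def pair_prod_deg_def prod_val_Suc_lower)
next
  case (Suc n)
  let ?D = "pair_prod_deg n" and ?K = "(2::nat) ^ (n - 1)"
  let ?l = "min j ?D" and ?c = "\<lambda>i. coeff (pair_prod n) i * coeff (scaled_pair_poly n) (j - i)"
  have l: "?l \<le> ?D" "j - ?l \<le> ?K" using Suc.prems pair_prod_deg_Suc[OF Suc.hyps] by auto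
  have "has_val2 (prod_val (Suc n) j) (sum ?c {..j})"
  proof (rule has_val2_sum)
    show "has_val2 (prod_val (Suc n) j) (?c ?l)" unfolding prod_val_Suc_eq_min
      by (rule has_val2_mult[OF Suc.IH[OF l(1)] has_val2_coeff_scaled_pair_poly[OF Suc.hyps l(2)]])
  next
    fix i assume i: "i \<in> {..j}" "i \<noteq> ?l"
    show "2 ^ Suc (prod_val (Suc n) j) dvd ?c i"
    proof (cases "i \<le> ?D \<and> j - i \<le> ?K")
      case True
      have "Suc (prod_val (Suc n) j) \<le> prod_val n i + pair_val n (j - i)"
        using prod_val_Suc_lt[OF Suc.hyps _ _ _ i(2)] i(1) True by simp
      thus ?thesis using True
        by (intro pow2_dvd_mult has_val2_imp_dvd[OF Suc.IH]
            has_val2_imp_dvd[OF has_val2_coeff_scaled_pair_poly[OF Suc.hyps]]) auto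
    next
      case False
      thus ?thesis using degree_pair_prod[OF Suc.hyps] degree_scaled_pair_poly[of n]
        by (auto simp: coeff_eq_0)
    qed
  qed simp_all
  thus ?case unfolding pair_prod_Suc[OF Suc.hyps] coeff_mult .
qed

section \<open>Substituting $x^2 + 2x$\<close>

lemma pcompose_eq_sum:
  assumes "degree p \<le> N"
  shows "pcompose p q = (\<Sum>b\<le>N. smult (coeff p b) (q ^ b))"
proof -
  have pow: "pcompose ([:0, 1:] ^ b) q = q ^ b" for b
    by (induction b) (simp_all add: pcompose_mult pcompose_pCons pcompose_1)
  have "pcompose p q = pcompose (\<Sum>b\<le>N. monom (coeff p b) b) q"
    using assms by (metis poly_as_sum_of_monoms')
  also have "\<dots> = (\<Sum>b\<le>N. smult (coeff p b) (q ^ b))"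
    by (simp add: pcompose_sum monom_altdef pcompose_smult pow)
  finally show ?thesis .
qed

definition x_sq_plus_2x :: "int poly" where
  "x_sq_plus_2x = [:0, 2, 1:]"

lemma coeff_x_sq_plus_2x_pow:
  "coeff (x_sq_plus_2x ^ b) k = (if b \<le> k \<and> k \<le> 2 * b then int (b choose (k - b)) * 2 ^ (2 * b - k) else 0)"
proof -
  have "x_sq_plus_2x ^ b = monom 1 b * [:2, 1:] ^ b"
    by (simp add: x_sq_plus_2x_def monom_altdef flip: power_mult_distrib)
  hence c: "coeff (x_sq_plus_2x ^ b) k = (if k < b then 0 else coeff ([:2, 1::int:] ^ b) (k - b))"
    by (simp add: coeff_monom_mult)
  show ?thesis
  proof (cases "b \<le> k \<and> k \<le> 2 * b")
    case True
    hence "k - b \<le> b" "b - (k - b) = 2 * b - k" by arith+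
    thus ?thesis using c True coeff_linear_poly_power[of "k - b" b 2 "1::int"] by simp
  next
    case False
    have "degree ([:2, 1::int:] ^ b) = b" by (simp add: degree_power_eq)
    thus ?thesis using c False by (auto simp: coeff_eq_0)
  qed
qed

lemma coeff_one_plus_x_mult:
  fixes p :: "'a::comm_semiring_1 poly"
  shows "coeff ([:1, 1:] * p) i = coeff p i + (if i = 0 then 0 else coeff p (i - 1))"
proof -
  have "[:1, 1:] * p = p + pCons 0 p" by (simp add: algebra_simps)
  thus ?thesis by (cases i) (simp_all add: coeff_pCons)
qed

text \<open>Modulo 2, $x^2 + 2x \equiv x^2$.\<close>

lemma coeff_one_plus_x_mult_x_sq_plus_2x_pow:
  fixes i b :: nat
  defines "y \<equiv> \<lambda>b. coeff ([:1, 1:] * x_sq_plus_2x ^ b) i"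
  shows "b < i div 2 \<Longrightarrow> y b = 0"
    and "odd (y (i div 2))"
    and "i div 2 < b \<Longrightarrow> even (y b)"
proof -
  show "b < i div 2 \<Longrightarrow> y b = 0"
    unfolding y_def coeff_one_plus_x_mult by (auto simp: coeff_x_sq_plus_2x_pow)
  show "i div 2 < b \<Longrightarrow> even (y b)"
    unfolding y_def coeff_one_plus_x_mult coeff_x_sq_plus_2x_pow
    by (auto simp: dvd_add_right_iff intro!: dvd_mult)
  let ?m = "i div 2"
  have "i = 2 * ?m \<or> i = 2 * ?m + 1" by presburger
  then consider "i = 0" | "i = 2 * ?m" "0 < ?m" | "i = 2 * ?m + 1" by fastforce
  thus "odd (y ?m)"
  proof cases
    case 1
    thus ?thesis by (simp add: y_def)
  next
    case 2
    hence "i - ?m = ?m" "i - Suc ?m = ?m - 1" "?m \<le> i - 1" "i \<le> 2 * ?m" "\<not> i < ?m"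
      "(?m choose (?m - 1)) = ?m"
      by (simp_all add: binomial_symmetric[symmetric])
    hence "y ?m = 1 + 2 * int ?m"
      using 2 unfolding y_def coeff_one_plus_x_mult coeff_x_sq_plus_2x_pow by simp
    thus ?thesis by simp
  next
    case 3
    hence "i - Suc ?m = ?m" "?m \<le> i - 1" "i - 1 \<le> 2 * ?m" by simp_all
    thus ?thesis using 3 unfolding y_def coeff_one_plus_x_mult coeff_x_sq_plus_2x_pow by simp
  qed
qed

definition reduced_poly :: "nat \<Rightarrow> int poly" where
  "reduced_poly n = [:1, 1:] * pcompose (pair_prod n) x_sq_plus_2x"

lemma reduced_poly_Suc:
  "1 \<le> n \<Longrightarrow> reduced_poly (Suc n) = reduced_poly n * pcompose (scaled_pair_poly n) x_sq_plus_2x"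
  by (simp only: reduced_poly_def pair_prod_Suc pcompose_mult mult.assoc)

lemma has_val2_coeff_reduced_poly:
  assumes n: "1 \<le> n" and i: "i \<le> 2 * pair_prod_deg n + 1"
  shows "has_val2 (prod_val n (i div 2)) (coeff (reduced_poly n) i)"
proof -
  let ?m = "i div 2" and ?y = "\<lambda>b. coeff ([:1, 1:] * x_sq_plus_2x ^ b) i"
  have "coeff (reduced_poly n) i = (\<Sum>b\<le>pair_prod_deg n. coeff (pair_prod n) b * ?y b)"
    unfolding reduced_poly_def pcompose_eq_sum[OF degree_pair_prod[OF n]]
    by (simp add: sum_distrib_left coeff_sum mult_smult_right)
  also have "has_val2 (prod_val n ?m) \<dots>"
  proof (rule has_val2_sum)
    show "?m \<in> {..pair_prod_deg n}" using i by simp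
    thus "has_val2 (prod_val n ?m) (coeff (pair_prod n) ?m * ?y ?m)"
      using has_val2_mult[OF has_val2_coeff_pair_prod[OF n], of ?m 0]
        coeff_one_plus_x_mult_x_sq_plus_2x_pow(2)[of i] by simp
  next
    fix b assume b: "b \<in> {..pair_prod_deg n}" "b \<noteq> ?m"
    show "2 ^ Suc (prod_val n ?m) dvd coeff (pair_prod n) b * ?y b"
    proof (cases "b < ?m")
      case True
      thus ?thesis using coeff_one_plus_x_mult_x_sq_plus_2x_pow(1) by simp
    next
      case False
      hence "2 ^ prod_val n ?m dvd coeff (pair_prod n) b"
        using has_val2_imp_dvd[OF has_val2_coeff_pair_prod[OF n]] prod_val_mono[of ?m b n] b by simp
      moreover have "2 dvd ?y b"
        using coeff_one_plus_x_mult_x_sq_plus_2x_pow(3) False b(2) by simp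
      ultimately have "2 ^ prod_val n ?m * 2 dvd coeff (pair_prod n) b * ?y b"
        by (rule mult_dvd_mono)
      thus ?thesis by (metis power_Suc2)
    qed
  qed simp
  finally show ?thesis .
qed

section \<open>Stirling numbers as coefficients\<close>

lemma coeff_prod_linear_stirling: "coeff (\<Prod>i<N. [:int i, 1:]) k = int (stirling N k)"
proof (induction N arbitrary: k)
  case 0
  show ?case by (cases k) simp_all
next
  case (Suc N)
  have "(\<Prod>i<Suc N. [:int i, 1:]) = pCons 0 (\<Prod>i<N. [:int i, 1:]) + smult (int N) (\<Prod>i<N. [:int i, 1:])"
    by (simp add: algebra_simps)
  moreover have "int N * int (stirling N 0) = 0" by (cases N) simp_all
  ultimately show ?case using Suc.IH by (cases k) (simp_all add: coeff_pCons)
qed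

definition scaled_rising_poly :: "nat \<Rightarrow> int poly" where
  "scaled_rising_poly n = (\<Prod>i<2 ^ n. [:int i, 2 ^ (n - 1):])"

lemma coeff_scaled_rising_poly:
  "coeff (scaled_rising_poly n) k = 2 ^ ((n - 1) * k) * int (stirling (2 ^ n) k)"
proof -
  have "scaled_rising_poly n = pcompose (\<Prod>i<2 ^ n. [:int i, 1:]) [:0, 2 ^ (n - 1):]"
    unfolding scaled_rising_poly_def pcompose_prod by (simp add: pcompose_pCons)
  thus ?thesis by (simp add: coeff_pcompose_linear coeff_prod_linear_stirling power_mult)
qed

lemma prod_lessThan_double:
  fixes k :: nat
  shows "(\<Prod>i<2 * k. f i) = (\<Prod>i<k. f (2 * i)) * (\<Prod>i<k. f (2 * i + 1))"
  by (induction k) (simp_all add: ac_simps)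

lemma prod_lessThan_double_pairs:
  fixes k :: nat
  shows "(\<Prod>l<2 * k. g l) = (\<Prod>l<k. g l * g (2 * k - 1 - l))"
proof -
  have "(\<Prod>l<k. g (k + l)) = (\<Prod>l<k. g (k + (k - Suc l)))"
    by (rule prod.nat_diff_reindex[symmetric])
  also have "\<dots> = (\<Prod>l<k. g (2 * k - 1 - l))"
    by (intro prod.cong) (simp_all add: mult_2)
  finally show ?thesis
    using prod_lessThan_add[where a = k and b = k and f = g] by (simp add: mult_2 prod.distrib)
qed

lemma linear_pair_mult:
  fixes a q :: "'a::comm_ring_1"
  shows "[:a, q:] * [:2 * q - a, q:] = pcompose [:q * q - (q - a) ^ 2, 1:] (pcompose [:0, q * q:] [:0, 2, 1:])"
  by (simp add: pcompose_pCons algebra_simps power2_eq_square)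

lemma pcompose_scaled_pair_poly:
  assumes "1 \<le> n"
  shows "pcompose (scaled_pair_poly n) x_sq_plus_2x = (\<Prod>i<2 ^ n. [:int (2 * i + 1), 2 ^ n:])"
proof -
  let ?K = "(2::nat) ^ (n - 1)"
  have M: "(2::nat) ^ n = 2 * ?K" "(2::int) ^ n = 2 * 2 ^ (n - 1)" "(4::int) ^ n = 2 ^ n * 2 ^ n"
    using assms by (cases n; simp add: power_mult_distrib[symmetric])+
  have "[:int (2 * l + 1), 2 ^ n:] * [:int (2 * (2 * ?K - 1 - l) + 1), 2 ^ n:]
      = pcompose [:4 ^ n - (2 ^ n - 2 * int l - 1) ^ 2, 1:] (pcompose [:0, 4 ^ n:] x_sq_plus_2x)"
    if "l < ?K" for l
  proof -
    have c: "int (2 * (2 * ?K - 1 - l) + 1) = 2 * 2 ^ n - int (2 * l + 1)"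
      using that M(2) by (simp add: of_nat_diff)
    have d: "(2::int) ^ n - 2 * int l - 1 = 2 ^ n - int (2 * l + 1)" by simp
    show ?thesis unfolding c d M(3) x_sq_plus_2x_def by (rule linear_pair_mult)
  qed
  hence "(\<Prod>i<2 ^ n. [:int (2 * i + 1), 2 ^ n:])
      = (\<Prod>l<?K. pcompose [:4 ^ n - (2 ^ n - 2 * int l - 1) ^ 2, 1:] (pcompose [:0, 4 ^ n:] x_sq_plus_2x))"
    unfolding M(1) prod_lessThan_double_pairs by (intro prod.cong) auto
  thus ?thesis
    unfolding scaled_pair_poly_def pair_poly_def pcompose_assoc[symmetric] pcompose_prod ..
qed

lemma scaled_rising_poly_Suc:
  assumes "1 \<le> n"
  shows "scaled_rising_poly (Suc n)
    = smult (2 ^ 2 ^ n) (scaled_rising_poly n * pcompose (scaled_pair_poly n) x_sq_plus_2x)"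
proof -
  let ?M = "(2::nat) ^ n"
  have M: "?M = 2 * 2 ^ (n - 1)" using assms by (cases n) simp_all
  have "scaled_rising_poly (Suc n) = (\<Prod>i<2 * ?M. [:int i, int ?M:])"
    unfolding scaled_rising_poly_def by simp
  also have "\<dots> = (\<Prod>i<?M. [:int (2 * i), int ?M:]) * (\<Prod>i<?M. [:int (2 * i + 1), int ?M:])"
    by (rule prod_lessThan_double)
  also have "(\<Prod>i<?M. [:int (2 * i), int ?M:]) = (\<Prod>i<?M. smult 2 [:int i, 2 ^ (n - 1):])"
    by (subst M) simp
  also have "\<dots> = smult (2 ^ ?M) (scaled_rising_poly n)"
    unfolding prod_smult scaled_rising_poly_def by simp
  finally show ?thesis
    using pcompose_scaled_pair_poly[OF assms] by (simp add: mult_smult_left)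
qed

text \<open>The factor $x$ comes from $i = 0$, and the power of 2 from the even factors
  at all levels of the recursion.\<close>

lemma scaled_rising_poly_eq:
  "1 \<le> n \<Longrightarrow> scaled_rising_poly n = smult (2 ^ (2 ^ n - 2)) ([:0, 1:] * reduced_poly n)"
proof (induction n rule: nat_induct_at_least)
  case base
  have "scaled_rising_poly 1 = [:0, 1:] * [:1, 1:]"
    unfolding scaled_rising_poly_def by (simp add: numeral_2_eq_2 lessThan_Suc)
  moreover have "reduced_poly 1 = [:1, 1:]" unfolding reduced_poly_def pair_prod_def by (simp add: pcompose_1)
  ultimately show ?case by simp
next
  case (Suc n)
  have "(2::nat) ^ 1 \<le> 2 ^ n" using Suc.hyps by (rule power_increasing) simp
  hence "2 ^ Suc n - 2 = 2 ^ n + (2 ^ n - (2::nat))" by simp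
  hence "(2::int) ^ (2 ^ Suc n - 2) = 2 ^ 2 ^ n * 2 ^ (2 ^ n - 2)" by (simp only: power_add)
  thus ?case
    unfolding scaled_rising_poly_Suc[OF Suc.hyps] reduced_poly_Suc[OF Suc.hyps] Suc.IH
    by (simp add: mult_smult_left mult.assoc)
qed

lemma v2_stirling_pow2:
  assumes "1 \<le> n" "1 \<le> k" "k \<le> 2 ^ n"
  obtains v where "v2 (stirling (2 ^ n) k) = enat v"
    and "v + (n - 1) * k = 2 ^ n - 2 + prod_val n ((k - 1) div 2)"
proof -
  let ?s = "stirling (2 ^ n) k" and ?e = "2 ^ n - 2 + prod_val n ((k - 1) div 2)"
  have "k - 1 \<le> 2 * pair_prod_deg n + 1"
    using assms unfolding pair_prod_deg_def by (cases n) simp_all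
  hence "has_val2 ?e (2 ^ (2 ^ n - 2) * coeff (reduced_poly n) (k - 1))"
    by (intro has_val2_pow2_mult has_val2_coeff_reduced_poly assms(1))
  moreover have "coeff (scaled_rising_poly n) k = 2 ^ (2 ^ n - 2) * coeff (reduced_poly n) (k - 1)"
    unfolding scaled_rising_poly_eq[OF assms(1)] using assms(2) by (cases k) (simp_all add: coeff_pCons)
  ultimately have e: "has_val2 ?e (2 ^ ((n - 1) * k) * int ?s)"
    by (simp add: coeff_scaled_rising_poly)
  hence "?s \<noteq> 0" using has_val2_imp_nonzero by fastforce
  hence v: "has_val2 (multiplicity 2 ?s) (int ?s)" by (simp add: has_val2_multiplicity2)
  show ?thesis
  proof
    show "v2 ?s = enat (multiplicity 2 ?s)" by (rule v2_eq_if_has_val2[OF v])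
    show "multiplicity 2 ?s + (n - 1) * k = ?e"
      using has_val2_unique[OF has_val2_pow2_mult[OF v] e] by simp
  qed
qed

theorem mainTheorem11:
  fixes n k :: nat
  assumes "n \<ge> 2" and "1 \<le> k" and "k \<le> 2 ^ n"
  shows "v2 (stirling (2 ^ n) (k + 1)) + enat n > v2 (stirling (2 ^ n) k)"
proof (cases "k = 2 ^ n")
  case True
  then show ?thesis by (simp add: v2_def)
next
  case False
  have n: "1 \<le> n" using assms(1) by simp
  obtain v where v: "v2 (stirling (2 ^ n) k) = enat v"
    and v_eq: "v + (n - 1) * k = 2 ^ n - 2 + prod_val n ((k - 1) div 2)"
    using v2_stirling_pow2[OF n assms(2,3)] .
  obtain w where w: "v2 (stirling (2 ^ n) (k + 1)) = enat w"
    and w_eq: "w + (n - 1) * (k + 1) = 2 ^ n - 2 + prod_val n (k div 2)"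
    using v2_stirling_pow2[OF n, of "k + 1"] assms(3) False by auto
  have "prod_val n ((k - 1) div 2) \<le> prod_val n (k div 2)"
    by (intro prod_val_mono div_le_mono) simp
  moreover have "(n - 1) * (k + 1) = (n - 1) * k + (n - 1)" by simp
  ultimately have "v < w + n" using v_eq w_eq n by linarith
  thus ?thesis using v w by simp
qed

end
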